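(* Let $\phi$ be an embedding of the complete bipartite graph $K_{m,n}$ into a projective plane $\pi$. Then the set of complement lines of $\phi$ is disjoint from the set of lines onto which the edges of $K_{m,n}$ are mapped.
   Context: A finite projective plane: points and lines such that any two distinct points lie on a unique line and any two distinct lines meet in a unique point (with standard nondegeneracy). An embedding of a simple graph $G=(V,E)$ into $\pi$ is an injective map $\phi$ from $V$ to the points of $\pi$ such that the induced map $\overline{\phi}$ sending an edge $ab$ to the line through $\phi(a),\phi(b)$ is injective on $E$; the lines $\overline{\phi}(E)$ are the embedded edges. A complement line of the embedding $\phi$ is a line through $\phi(v)$ and $\phi(w)$ for distinct vertices $v,w$ of $G$ with $vw\notin E$. *)

theory Defs
  imports Main
begin

definition collinear :: "'p set \<Rightarrow> 'l set \<Rightarrow> ('p \<Rightarrow> 'l \<Rightarrow> bool) \<Rightarrow> 'p set \<Rightarrow> bool" where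
  "collinear P L I S \<longleftrightarrow> (\<exists>l\<in>L. \<forall>p\<in>S. I p l)"

definition projective_plane :: "'p set \<Rightarrow> 'l set \<Rightarrow> ('p \<Rightarrow> 'l \<Rightarrow> bool) \<Rightarrow> bool" where
  "projective_plane P L I \<longleftrightarrow>
     (\<forall>p\<in>P. \<forall>q\<in>P. p \<noteq> q \<longrightarrow> (\<exists>!l. l \<in> L \<and> I p l \<and> I q l)) \<and>
     (\<forall>l\<in>L. \<forall>m\<in>L. l \<noteq> m \<longrightarrow> (\<exists>!p. p \<in> P \<and> I p l \<and> I p m)) \<and>
     (\<exists>a\<in>P. \<exists>b\<in>P. \<exists>c\<in>P. \<exists>d\<in>P. card {a, b, c, d} = 4 \<and>
        (\<forall>S\<subseteq>{a, b, c, d}. card S = 3 \<longrightarrow> \<not> collinear P L I S))"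

definition finite_projective_plane :: "'p set \<Rightarrow> 'l set \<Rightarrow> ('p \<Rightarrow> 'l \<Rightarrow> bool) \<Rightarrow> bool" where
  "finite_projective_plane P L I \<longleftrightarrow> projective_plane P L I \<and> finite P \<and> finite L"

definition line_through :: "'p set \<Rightarrow> 'l set \<Rightarrow> ('p \<Rightarrow> 'l \<Rightarrow> bool) \<Rightarrow> 'p \<Rightarrow> 'p \<Rightarrow> 'l" where
  "line_through P L I p q = (THE l. l \<in> L \<and> I p l \<and> I q l)"

definition simple_graph :: "'v set \<Rightarrow> 'v set set \<Rightarrow> bool" where
  "simple_graph V E \<longleftrightarrow> (\<forall>e\<in>E. \<exists>a b. a \<in> V \<and> b \<in> V \<and> a \<noteq> b \<and> e = {a, b})"

definition edge_line :: "'p set \<Rightarrow> 'l set \<Rightarrow> ('p \<Rightarrow> 'l \<Rightarrow> bool) \<Rightarrow> ('v \<Rightarrow> 'p) \<Rightarrow> 'v set \<Rightarrow> 'l" where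
  "edge_line P L I \<phi> e = (THE l. l \<in> L \<and> (\<forall>v\<in>e. I (\<phi> v) l))"

definition embedding ::
  "'p set \<Rightarrow> 'l set \<Rightarrow> ('p \<Rightarrow> 'l \<Rightarrow> bool) \<Rightarrow> 'v set \<Rightarrow> 'v set set \<Rightarrow> ('v \<Rightarrow> 'p) \<Rightarrow> bool" where
  "embedding P L I V E \<phi> \<longleftrightarrow> \<phi> ` V \<subseteq> P \<and> inj_on \<phi> V \<and> inj_on (edge_line P L I \<phi>) E"

definition embedded_edges ::
  "'p set \<Rightarrow> 'l set \<Rightarrow> ('p \<Rightarrow> 'l \<Rightarrow> bool) \<Rightarrow> 'v set set \<Rightarrow> ('v \<Rightarrow> 'p) \<Rightarrow> 'l set" where
  "embedded_edges P L I E \<phi> = edge_line P L I \<phi> ` E"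

definition complement_lines ::
  "'p set \<Rightarrow> 'l set \<Rightarrow> ('p \<Rightarrow> 'l \<Rightarrow> bool) \<Rightarrow> 'v set \<Rightarrow> 'v set set \<Rightarrow> ('v \<Rightarrow> 'p) \<Rightarrow> 'l set" where
  "complement_lines P L I V E \<phi> =
     {line_through P L I (\<phi> v) (\<phi> w) | v w. v \<in> V \<and> w \<in> V \<and> v \<noteq> w \<and> {v, w} \<notin> E}"

definition Kmn_V :: "nat \<Rightarrow> nat \<Rightarrow> (nat + nat) set" where
  "Kmn_V m n = Inl ` {..<m} \<union> Inr ` {..<n}"

definition Kmn_E :: "nat \<Rightarrow> nat \<Rightarrow> (nat + nat) set set" where
  "Kmn_E m n = {{Inl i, Inr j} | i j. i < m \<and> j < n}"

end

theory Submission
  imports Defs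
begin

text \<open>A non-edge of K_{m,n} joins two vertices on the same side, say \<open>Inl i\<close> and \<open>Inl i'\<close>.
  If its line were also the line of an edge \<open>{Inl a, Inr b}\<close>, then some \<open>Inl c\<close> with
  \<open>c \<noteq> a\<close> lies on that line, so the distinct edges \<open>{Inl c, Inr b}\<close> and \<open>{Inl a, Inr b}\<close>
  would be mapped to the same line, contradicting injectivity of the embedding on edges.\<close>

lemma projective_plane_line_unique:
  assumes "projective_plane P L I" "p \<in> P" "q \<in> P" "p \<noteq> q"
  shows "\<exists>!l. l \<in> L \<and> I p l \<and> I q l"
proof -
  have "\<forall>p\<in>P. \<forall>q\<in>P. p \<noteq> q \<longrightarrow> (\<exists>!l. l \<in> L \<and> I p l \<and> I q l)"
    using assms(1) unfolding projective_plane_def by (elim conjE)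
  then show ?thesis using assms(2-4) by blast
qed

lemma line_through:
  assumes "projective_plane P L I" "p \<in> P" "q \<in> P" "p \<noteq> q"
  shows "line_through P L I p q \<in> L" "I p (line_through P L I p q)" "I q (line_through P L I p q)"
  using theI'[OF projective_plane_line_unique[OF assms]] unfolding line_through_def by simp_all

lemma line_through_unique:
  assumes "projective_plane P L I" "p \<in> P" "q \<in> P" "p \<noteq> q"
    and "l \<in> L" "I p l" "I q l"
  shows "line_through P L I p q = l"
  unfolding line_through_def
  using the1_equality[OF projective_plane_line_unique[OF assms(1-4)]] assms(5-7) by simp

lemma edge_line_doubleton:
  assumes "projective_plane P L I" "\<phi> x \<in> P" "\<phi> y \<in> P" "\<phi> x \<noteq> \<phi> y"
  shows "edge_line P L I \<phi> {x, y} = line_through P L I (\<phi> x) (\<phi> y)"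
  unfolding edge_line_def
proof (rule the_equality)
  show "line_through P L I (\<phi> x) (\<phi> y) \<in> L \<and> (\<forall>v\<in>{x, y}. I (\<phi> v) (line_through P L I (\<phi> x) (\<phi> y)))"
    using line_through[OF assms] by simp
next
  fix l assume "l \<in> L \<and> (\<forall>v\<in>{x, y}. I (\<phi> v) l)"
  then show "l = line_through P L I (\<phi> x) (\<phi> y)"
    using line_through_unique[OF assms] by (simp add: eq_commute)
qed

lemma embedding_edge_line_neighbour:
  assumes pp: "projective_plane P L I" and emb: "embedding P L I V E \<phi>"
    and edges: "{a, b} \<in> E" "{c, b} \<in> E"
    and in_V: "a \<in> V" "b \<in> V" "c \<in> V" and "a \<noteq> b" "c \<noteq> b"
    and incident: "I (\<phi> c) (edge_line P L I \<phi> {a, b})"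
  shows "c = a"
proof -
  have in_P: "\<phi> a \<in> P" "\<phi> b \<in> P" "\<phi> c \<in> P" and inj: "inj_on \<phi> V"
    and inj_edges: "inj_on (edge_line P L I \<phi>) E"
    using emb in_V unfolding embedding_def by auto
  have "\<phi> a \<noteq> \<phi> b" "\<phi> c \<noteq> \<phi> b"
    using inj in_V \<open>a \<noteq> b\<close> \<open>c \<noteq> b\<close> by (metis inj_on_def)+
  define l where "l = edge_line P L I \<phi> {a, b}"
  have l: "l \<in> L" "I (\<phi> b) l"
    using line_through[OF pp in_P(1,2) \<open>\<phi> a \<noteq> \<phi> b\<close>]
      edge_line_doubleton[of P L I \<phi> a b, OF pp in_P(1,2) \<open>\<phi> a \<noteq> \<phi> b\<close>] unfolding l_def by simp_all
  have "edge_line P L I \<phi> {c, b} = line_through P L I (\<phi> c) (\<phi> b)"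
    using edge_line_doubleton[of P L I \<phi> c b, OF pp in_P(3,2) \<open>\<phi> c \<noteq> \<phi> b\<close>] .
  also have "\<dots> = l"
    using line_through_unique[OF pp in_P(3,2) \<open>\<phi> c \<noteq> \<phi> b\<close> l(1) _ l(2)] incident
    unfolding l_def .
  finally have "edge_line P L I \<phi> {c, b} = edge_line P L I \<phi> {a, b}"
    unfolding l_def .
  then have "{c, b} = {a, b}"
    by (rule inj_onD[OF inj_edges _ edges(2,1)])
  then show ?thesis
    using \<open>c \<noteq> b\<close> by (metis doubleton_eq_iff)
qed

lemma Kmn_non_edge [consumes 3, case_names left right]:
  assumes "v \<in> Kmn_V m n" "w \<in> Kmn_V m n" "{v, w} \<notin> Kmn_E m n"
  obtains i i' where "v = Inl i" "w = Inl i'" "i < m" "i' < m"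
    | j j' where "v = Inr j" "w = Inr j'" "j < n" "j' < n"
  using assms unfolding Kmn_V_def Kmn_E_def by (auto simp: insert_commute)

lemma Kmn_edge_line_meets_sides_once:
  assumes pp: "projective_plane P L I" and emb: "embedding P L I (Kmn_V m n) (Kmn_E m n) \<phi>"
    and ab: "a < m" "b < n"
  shows "\<And>c. c < m \<Longrightarrow> I (\<phi> (Inl c)) (edge_line P L I \<phi> {Inl a, Inr b}) \<Longrightarrow> c = a"
    and "\<And>d. d < n \<Longrightarrow> I (\<phi> (Inr d)) (edge_line P L I \<phi> {Inl a, Inr b}) \<Longrightarrow> d = b"
proof -
  have edge: "\<And>i j. i < m \<Longrightarrow> j < n \<Longrightarrow> {Inl i, Inr j} \<in> Kmn_E m n"
    and vert: "\<And>i. i < m \<Longrightarrow> Inl i \<in> Kmn_V m n" "\<And>j. j < n \<Longrightarrow> Inr j \<in> Kmn_V m n"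
    unfolding Kmn_E_def Kmn_V_def by auto
  note neighbour = embedding_edge_line_neighbour[OF pp emb]
  show "c = a" if "c < m" "I (\<phi> (Inl c)) (edge_line P L I \<phi> {Inl a, Inr b})" for c
    using neighbour[OF edge[OF ab] edge[OF that(1) ab(2)] vert(1)[OF ab(1)] vert(2)[OF ab(2)]
        vert(1)[OF that(1)]] that(2) by simp
  show "d = b" if "d < n" "I (\<phi> (Inr d)) (edge_line P L I \<phi> {Inl a, Inr b})" for d
    using neighbour[of "Inr b" "Inl a" "Inr d"] edge[OF ab] edge[OF ab(1) that(1)]
      vert(1)[OF ab(1)] vert(2)[OF ab(2)] vert(2)[OF that(1)] that(2) by (simp add: insert_commute)
qed

theorem lemma3p7:
  fixes P :: "'p set" and L :: "'l set" and I :: "'p \<Rightarrow> 'l \<Rightarrow> bool"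
    and m n :: nat and \<phi> :: "nat + nat \<Rightarrow> 'p"
  assumes "finite_projective_plane P L I"
    and "embedding P L I (Kmn_V m n) (Kmn_E m n) \<phi>"
  shows "complement_lines P L I (Kmn_V m n) (Kmn_E m n) \<phi>
           \<inter> embedded_edges P L I (Kmn_E m n) \<phi> = {}"
proof (rule ccontr)
  have pp: "projective_plane P L I"
    using assms(1) unfolding finite_projective_plane_def by simp
  assume "complement_lines P L I (Kmn_V m n) (Kmn_E m n) \<phi> \<inter> embedded_edges P L I (Kmn_E m n) \<phi> \<noteq> {}"
  then obtain v w a b where vw: "v \<in> Kmn_V m n" "w \<in> Kmn_V m n" "v \<noteq> w" "{v, w} \<notin> Kmn_E m n"
    and ab: "a < m" "b < n"
    and l: "line_through P L I (\<phi> v) (\<phi> w) = edge_line P L I \<phi> {Inl a, Inr b}"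
    unfolding complement_lines_def embedded_edges_def Kmn_E_def by blast
  have "\<phi> v \<in> P" "\<phi> w \<in> P" "\<phi> v \<noteq> \<phi> w"
    using assms(2) vw unfolding embedding_def inj_on_def by auto
  then have on_l: "I (\<phi> v) (edge_line P L I \<phi> {Inl a, Inr b})" "I (\<phi> w) (edge_line P L I \<phi> {Inl a, Inr b})"
    using line_through[OF pp] l by metis+
  note once = Kmn_edge_line_meets_sides_once[OF pp assms(2) ab]
  from vw(1,2,4) have "v = w"
  proof (cases rule: Kmn_non_edge)
    case (left i i')
    then show "v = w" using once(1)[of i] once(1)[of i'] on_l by simp
  next
    case (right j j')
    then show "v = w" using once(2)[of j] once(2)[of j'] on_l by simp
  qed
  with vw(3) show False by contradiction
qed

end
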